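(* Fix an index $k\ge 0$ and approximations $x_1^{[k]},\dots,x_m^{[k]}\in(a,b)$. For each $i=1,\dots,m$ assume that the iteration $$x_i^{[k+1]} = x_i^{[k]} - \alpha_i f(x_i^{[k]})\Big[f'(x_i^{[k]}) - f(x_i^{[k]})\,Q_i'(x_i^{[k]})\big[(\alpha_i+1)Q_i(x_i^{[k]})\big]^{-1}\Big]^{-1}\qquad(\ast)$$ is well defined, i.e. $Q_i(x_i^{[k]})\neq 0$ and the bracket being inverted is nonzero. Suppose there are real numbers $A_{is},B_{is}$ ($i,s=1,\dots,m$) such that for every $i$ $$\Phi_i^{(\alpha_i+1)}(x_i)=\sum_{s=1}^m A_{is}\,(x_s^{[k]}-x_s),\qquad \Psi_i^{(\alpha_i-1)}(x_i)=(\alpha_i+1)\big[f^{(\alpha_i)}(x_i)\big]^2+\sum_{s=1}^m B_{is}\,(x_s^{[k]}-x_s).$$ Let $A,B,M,K,P$ be constants with $|A_{is}|\le A$ and $|B_{is}|\le B$ for all $i,s$; $|\Phi_i^{(\alpha_i+2)}(x)|\le M$ and $|\Psi_i^{(\alpha_i)}(x)|\le K$ for all $i$ and all $x$ in the closed interval with endpoints $x_i$ and $x_i^{[k]}$; and $0<P\le |f^{(\alpha_i)}(x_i)|$ for all $i$. Let $c>0$ and $0<q<1$ be real numbers such that for every $i=1,\dots,m$ $$c^2\Big[mA+\frac{M}{\alpha_i+2}\Big] < (\alpha_i+1)^2\alpha_i P^2 - c(\alpha_i+1)\big[\alpha_i B m+K\big].$$ If $|x_i^{[k]}-x_i|<c\,q^{3^k}$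 for all $i=1,\dots,m$, then $|x_i^{[k+1]}-x_i|<c\,q^{3^{k+1}}$ for all $i=1,\dots,m$. (In particular, the method $(\ast)$ has third order of convergence.)
   Context: Let $(a,b)$ be a real interval and let $\varphi_0,\dots,\varphi_n$ be infinitely differentiable real functions on $(a,b)$ forming a Chebyshev system there. Let $\alpha_1,\dots,\alpha_m$ be positive integers with $\sum_{j=1}^m\alpha_j=n$. For $x,y_1,\dots,y_m\in(a,b)$ let $D(x;y_1,\dots,y_m)$ denote the determinant of the $(n+1)\times(n+1)$ matrix whose first row is $(\varphi_0(x),\dots,\varphi_n(x))$, followed, for $j=1,\dots,m$ in order and for $r=0,1,\dots,\alpha_j-1$ in order, by the rows $(\varphi_0^{(r)}(y_j),\dots,\varphi_n^{(r)}(y_j))$. Let $x_1,\dots,x_m\in(a,b)$ be distinct and set $f(x)=D(x;x_1,\dots,x_m)$; this is a generalized polynomial $\sum_{j=0}^n a_j\varphi_j(x)$ having zeros $x_1,\dots,x_m$ of multiplicities $\alpha_1,\dots,\alpha_m$. Given approximations $x_1^{[k]},\dots,x_m^{[k]}\in(a,b)$ of these zeros, define for $i=1,\dots,m$ $$Q_i(x)=\frac{\partial^{\alpha_i}}{\partial x^{\alpha_i}}D(x;x_1^{[k]},\dots,x_m^{[k]}),$$ $$\Phi_i(x)=(\alpha_i+1)\big[(x-x_i)f'(x)-\alpha_i f(x)\big]Q_i(x)-(x-x_i)f(x)Q_i'(x),\qquad \Psi_i(x)=(\alpha_i+1)f'(x)Q_i(x)-f(x)Q_i'(x).$$ Derivatives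 of order $0$ mean the function itself. *)

theory Defs
  imports "HOL-Analysis.Derivative" "Jordan_Normal_Form.Determinant"
begin

text \<open>Indices are 0-based: functions phi 0, ..., phi n; zeros x 0, ..., x (m-1)
  with multiplicities al 0, ..., al (m-1).\<close>

definition smooth_on :: "(real \<Rightarrow> real) \<Rightarrow> real set \<Rightarrow> bool" where
  "smooth_on g S \<longleftrightarrow> (\<forall>k. \<forall>x\<in>S. ((deriv ^^ k) g has_real_derivative (deriv ^^ Suc k) g x) (at x))"

definition chebyshev_system :: "(nat \<Rightarrow> real \<Rightarrow> real) \<Rightarrow> nat \<Rightarrow> real set \<Rightarrow> bool" where
  "chebyshev_system phi n S \<longleftrightarrow>
     (\<forall>t. (\<forall>i\<le>n. t i \<in> S) \<and> inj_on t {..n} \<longrightarrow>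
        Determinant.det (mat (Suc n) (Suc n) (\<lambda>(r, c). phi c (t r))) \<noteq> 0)"

definition rowspec :: "(nat \<Rightarrow> nat) \<Rightarrow> nat \<Rightarrow> (nat \<times> nat) list" where
  "rowspec al m = concat (map (\<lambda>j. map (\<lambda>r. (j, r)) [0..<al j]) [0..<m])"

definition Dfun :: "(nat \<Rightarrow> real \<Rightarrow> real) \<Rightarrow> nat \<Rightarrow> nat \<Rightarrow> (nat \<Rightarrow> nat) \<Rightarrow> real \<Rightarrow> (nat \<Rightarrow> real) \<Rightarrow> real" where
  "Dfun phi n m al x ys =
     Determinant.det (mat (Suc n) (Suc n) (\<lambda>(r, c).
        if r = 0 then phi c x
        else (case rowspec al m ! (r - 1) of (j, d) \<Rightarrow> (deriv ^^ d) (phi c) (ys j))))"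

definition PhiF :: "(real \<Rightarrow> real) \<Rightarrow> (real \<Rightarrow> real) \<Rightarrow> nat \<Rightarrow> real \<Rightarrow> real \<Rightarrow> real" where
  "PhiF f Q a xi x =
     (real a + 1) * ((x - xi) * deriv f x - real a * f x) * Q x - (x - xi) * f x * deriv Q x"

definition PsiF :: "(real \<Rightarrow> real) \<Rightarrow> (real \<Rightarrow> real) \<Rightarrow> nat \<Rightarrow> real \<Rightarrow> real" where
  "PsiF f Q a x = (real a + 1) * deriv f x * Q x - f x * deriv Q x"

end

theory Submission
  imports Defs "HOL-Analysis.Complex_Analysis_Basics"
begin

(* Expanding D along its first row shows that f is a fixed linear combination of the phi_j,
   hence smooth, and f^(l)(x_i) = 0 for l < alpha_i because two rows coincide.
   With e = x_i^[k] - x_i, one step of the method gives x_i^[k+1] - x_i = Phi_i(x_i^[k]) / Psi_i(x_i^[k]).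
   By Leibniz' rule Phi_i vanishes to order alpha_i + 1 and Psi_i to order alpha_i - 1 at x_i, so
   Taylor's formula with Lagrange remainder yields
     x_i^[k+1] - x_i = e^2 (Phi_i^(alpha+1)(x_i) + O(e)) / (alpha (alpha+1) Psi_i^(alpha-1)(x_i) + O(e)).
   The hypotheses bound the numerator by c q^(3^k) (mA + M/(alpha+2)) and the denominator from below
   by the right-hand side of the condition on c, whence |x_i^[k+1] - x_i| < (c q^(3^k))^3 / c^2. *)

lemma smooth_onD:
  "smooth_on g S \<Longrightarrow> x \<in> S \<Longrightarrow> ((deriv ^^ k) g has_real_derivative (deriv ^^ Suc k) g x) (at x)"
  unfolding smooth_on_def by blast

lemma smooth_onD_deriv:
  "smooth_on g S \<Longrightarrow> x \<in> S \<Longrightarrow> ((deriv ^^ k) g has_real_derivative deriv ((deriv ^^ k) g) x) (at x)"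
  using smooth_onD[of g S x k] by simp

lemma smooth_on_higher_deriv: "smooth_on g S \<Longrightarrow> smooth_on ((deriv ^^ j) g) S"
  unfolding smooth_on_def funpow_add[symmetric, THEN fun_cong, unfolded o_def] by (metis add_Suc)

lemma smooth_on_deriv: "smooth_on g S \<Longrightarrow> smooth_on (deriv g) S"
  using smooth_on_higher_deriv[of g S 1] by simp

lemma higher_deriv_deriv: "(deriv ^^ l) (deriv g) = (deriv ^^ Suc l) g"
  by (simp add: funpow_Suc_right del: funpow.simps)

lemma higher_deriv_eqI:
  assumes S: "open S" and G0: "\<And>x. x \<in> S \<Longrightarrow> F x = G 0 x"
    and G: "\<And>k x. x \<in> S \<Longrightarrow> (G k has_real_derivative G (Suc k) x) (at x)"
    and x: "x \<in> S"
  shows "(deriv ^^ k) F x = G k x"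
  using x
proof (induction k arbitrary: x)
  case 0
  then show ?case using G0 by simp
next
  case (Suc k)
  have "eventually (\<lambda>y. (deriv ^^ k) F y = G k y) (nhds x)"
    using eventually_nhds_in_open[OF S Suc.prems] by (rule eventually_mono) (use Suc.IH in auto)
  then have "deriv ((deriv ^^ k) F) x = deriv (G k) x"
    by (rule deriv_cong_ev) simp
  also have "\<dots> = G (Suc k) x"
    by (rule DERIV_imp_deriv[OF G[OF Suc.prems]])
  finally show ?case by simp
qed

lemma smooth_onI:
  assumes S: "open S" and G0: "\<And>x. x \<in> S \<Longrightarrow> F x = G 0 x"
    and G: "\<And>k x. x \<in> S \<Longrightarrow> (G k has_real_derivative G (Suc k) x) (at x)"
  shows "smooth_on F S"
  unfolding smooth_on_def
proof (intro allI ballI)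
  fix k x assume x: "x \<in> S"
  have "((deriv ^^ k) F has_real_derivative G (Suc k) x) (at x)"
    by (rule has_field_derivative_transform_within_open[OF G[OF x] S x])
       (simp add: higher_deriv_eqI[OF S G0 G])
  then show "((deriv ^^ k) F has_real_derivative (deriv ^^ Suc k) F x) (at x)"
    by (simp only: higher_deriv_eqI[OF S G0 G x])
qed

lemma higher_deriv_diff:
  assumes "open S" "smooth_on g S" "smooth_on h S" "x \<in> S"
  shows "(deriv ^^ k) (\<lambda>x. g x - h x) x = (deriv ^^ k) g x - (deriv ^^ k) h x"
  by (rule higher_deriv_eqI[where G = "\<lambda>k x. (deriv ^^ k) g x - (deriv ^^ k) h x"])
     (use assms in \<open>auto intro!: DERIV_diff smooth_onD_deriv\<close>)

lemma smooth_on_diff: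
  assumes "open S" "smooth_on g S" "smooth_on h S"
  shows "smooth_on (\<lambda>x. g x - h x) S"
  by (rule smooth_onI[where G = "\<lambda>k x. (deriv ^^ k) g x - (deriv ^^ k) h x"])
     (use assms in \<open>auto intro!: DERIV_diff smooth_onD_deriv\<close>)

lemma higher_deriv_cmult:
  assumes "open S" "smooth_on g S" "x \<in> S"
  shows "(deriv ^^ k) (\<lambda>x. c * g x) x = c * (deriv ^^ k) g x"
  by (rule higher_deriv_eqI[where G = "\<lambda>k x. c * (deriv ^^ k) g x"])
     (use assms in \<open>auto intro!: DERIV_cmult smooth_onD_deriv\<close>)

lemma smooth_on_cmult:
  assumes "open S" "smooth_on g S"
  shows "smooth_on (\<lambda>x. c * g x) S"
  by (rule smooth_onI[where G = "\<lambda>k x. c * (deriv ^^ k) g x"])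
     (use assms in \<open>auto intro!: DERIV_cmult smooth_onD_deriv\<close>)

lemma higher_deriv_sum:
  assumes "open S" "\<And>i. i \<in> I \<Longrightarrow> smooth_on (g i) S" "x \<in> S"
  shows "(deriv ^^ k) (\<lambda>x. \<Sum>i\<in>I. g i x) x = (\<Sum>i\<in>I. (deriv ^^ k) (g i) x)"
  by (rule higher_deriv_eqI[where G = "\<lambda>k x. \<Sum>i\<in>I. (deriv ^^ k) (g i) x"])
     (use assms in \<open>auto intro!: DERIV_sum smooth_onD_deriv\<close>)

lemma smooth_on_sum:
  assumes "open S" "\<And>i. i \<in> I \<Longrightarrow> smooth_on (g i) S"
  shows "smooth_on (\<lambda>x. \<Sum>i\<in>I. g i x) S"
  by (rule smooth_onI[where G = "\<lambda>k x. \<Sum>i\<in>I. (deriv ^^ k) (g i) x"])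
     (use assms in \<open>auto intro!: DERIV_sum smooth_onD_deriv\<close>)

lemma Leibniz_has_real_derivative:
  assumes g: "smooth_on g S" and h: "smooth_on h S" and x: "x \<in> S"
  shows "((\<lambda>x. \<Sum>i = 0..k. real (k choose i) * (deriv ^^ i) g x * (deriv ^^ (k - i)) h x)
           has_real_derivative
           (\<Sum>i = 0..Suc k. real (Suc k choose i) * (deriv ^^ i) g x * (deriv ^^ (Suc k - i)) h x)) (at x)"
proof -
  have Pascal: "Suc k choose i = (k choose i) + (if i = 0 then 0 else k choose (i - 1))" for i
    by (cases i) simp_all
  have "(\<Sum>i = 0..k. real (k choose i) *
            (deriv ((deriv ^^ i) g) x * (deriv ^^ (k - i)) h x
             + deriv ((deriv ^^ (k - i)) h) x * (deriv ^^ i) g x))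
        = h x * deriv ((deriv ^^ k) g) x
          + (\<Sum>i = 0..k. (deriv ^^ i) g x * (real (Suc k choose i) * (deriv ^^ (Suc k - i)) h x))"
    apply (simp add: Pascal algebra_simps sum.distrib)
    apply (subst (4) sum_Suc_reindex)
    apply (auto simp: algebra_simps Suc_diff_le intro: sum.cong)
    done
  then show ?thesis
    by (auto intro!: derivative_eq_intros smooth_onD_deriv[OF g x] smooth_onD_deriv[OF h x]
             simp: sum.atLeast0_atMost_Suc algebra_simps)
qed

lemma higher_deriv_mult:
  assumes "open S" "smooth_on g S" "smooth_on h S" "x \<in> S"
  shows "(deriv ^^ k) (\<lambda>x. g x * h x) x
         = (\<Sum>i = 0..k. real (k choose i) * (deriv ^^ i) g x * (deriv ^^ (k - i)) h x)"
  by (rule higher_deriv_eqI[where G = "\<lambda>k x. \<Sum>i = 0..k. real (k choose i) * (deriv ^^ i) g x * (deriv ^^ (k - i)) h x",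
        OF assms(1) _ Leibniz_has_real_derivative[OF assms(2,3)] assms(4)]) simp

lemma smooth_on_mult:
  assumes "open S" "smooth_on g S" "smooth_on h S"
  shows "smooth_on (\<lambda>x. g x * h x) S"
  by (rule smooth_onI[where G = "\<lambda>k x. \<Sum>i = 0..k. real (k choose i) * (deriv ^^ i) g x * (deriv ^^ (k - i)) h x",
        OF assms(1) _ Leibniz_has_real_derivative[OF assms(2,3)]]) simp

lemma higher_deriv_mult_eq_0:
  assumes "open S" "smooth_on g S" "smooth_on h S" "x \<in> S"
    and "\<And>l. l \<le> k \<Longrightarrow> (deriv ^^ l) g x = 0"
  shows "(deriv ^^ k) (\<lambda>x. g x * h x) x = 0"
  unfolding higher_deriv_mult[OF assms(1-4)] by (simp add: assms(5))

lemma shift_mult_has_real_derivative: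
  assumes "smooth_on g S" "x \<in> S"
  shows "((\<lambda>x. (x - x0) * (deriv ^^ k) g x + real k * (deriv ^^ (k - 1)) g x) has_real_derivative
           (x - x0) * (deriv ^^ Suc k) g x + real (Suc k) * (deriv ^^ (Suc k - 1)) g x) (at x)"
  using smooth_onD_deriv[OF assms, of k] smooth_onD_deriv[OF assms, of "k - 1"]
  by (cases k) (auto intro!: derivative_eq_intros simp: algebra_simps)

lemma higher_deriv_shift_mult:
  assumes "open S" "smooth_on g S" "x \<in> S"
  shows "(deriv ^^ k) (\<lambda>x. (x - x0) * g x) x = (x - x0) * (deriv ^^ k) g x + real k * (deriv ^^ (k - 1)) g x"
  by (rule higher_deriv_eqI[where G = "\<lambda>k x. (x - x0) * (deriv ^^ k) g x + real k * (deriv ^^ (k - 1)) g x",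
        OF assms(1) _ shift_mult_has_real_derivative[OF assms(2)] assms(3)]) simp

lemma smooth_on_shift_mult:
  assumes "open S" "smooth_on g S"
  shows "smooth_on (\<lambda>x. (x - x0) * g x) S"
  by (rule smooth_onI[where G = "\<lambda>k x. (x - x0) * (deriv ^^ k) g x + real k * (deriv ^^ (k - 1)) g x",
        OF assms(1) _ shift_mult_has_real_derivative[OF assms(2)]]) simp

(* The cofactors along the first row do not depend on v, so Laplace expansion along it makes
   Dfun a fixed linear combination of the phi c. *)
definition Dmat :: "(nat \<Rightarrow> real) \<Rightarrow> (nat \<Rightarrow> real \<Rightarrow> real) \<Rightarrow> nat \<Rightarrow> nat \<Rightarrow> (nat \<Rightarrow> nat)
    \<Rightarrow> (nat \<Rightarrow> real) \<Rightarrow> real mat" where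
  "Dmat v phi n m al ys = mat (Suc n) (Suc n) (\<lambda>(r, c).
     if r = 0 then v c
     else (case rowspec al m ! (r - 1) of (j, d) \<Rightarrow> (deriv ^^ d) (phi c) (ys j)))"

definition Dcof :: "(nat \<Rightarrow> real \<Rightarrow> real) \<Rightarrow> nat \<Rightarrow> nat \<Rightarrow> (nat \<Rightarrow> nat) \<Rightarrow> (nat \<Rightarrow> real) \<Rightarrow> nat \<Rightarrow> real" where
  "Dcof phi n m al ys c = cofactor (Dmat (\<lambda>_. 0) phi n m al ys) 0 c"

lemma det_Dmat: "det (Dmat v phi n m al ys) = (\<Sum>c<Suc n. v c * Dcof phi n m al ys c)"
proof -
  have "det (Dmat v phi n m al ys)
        = (\<Sum>c<Suc n. Dmat v phi n m al ys $$ (0, c) * cofactor (Dmat v phi n m al ys) 0 c)"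
    by (rule laplace_expansion_row) (simp_all add: Dmat_def)
  also have "\<dots> = (\<Sum>c<Suc n. v c * Dcof phi n m al ys c)"
  proof (rule sum.cong[OF refl])
    fix c assume "c \<in> {..<Suc n}"
    moreover have "mat_delete (Dmat v phi n m al ys) 0 c = mat_delete (Dmat (\<lambda>_. 0) phi n m al ys) 0 c"
      by (rule eq_matI) (auto simp: mat_delete_def Dmat_def)
    ultimately show "Dmat v phi n m al ys $$ (0, c) * cofactor (Dmat v phi n m al ys) 0 c = v c * Dcof phi n m al ys c"
      by (simp add: Dcof_def cofactor_def Dmat_def)
  qed
  finally show ?thesis .
qed

lemma Dfun_eq_sum: "(\<lambda>x. Dfun phi n m al x ys) = (\<lambda>x. \<Sum>c<Suc n. Dcof phi n m al ys c * phi c x)"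
  by (simp add: Dfun_def det_Dmat[unfolded Dmat_def] mult.commute)

lemma length_rowspec: "length (rowspec al m) = (\<Sum>j<m. al j)"
  by (simp add: rowspec_def length_concat o_def sum_list_sum_nth atLeast0LessThan[symmetric] sum.reindex)

lemma det_Dmat_derivative_row:
  assumes "i < m" "d < al i" "(\<Sum>j<m. al j) = n"
  shows "det (Dmat (\<lambda>c. (deriv ^^ d) (phi c) (ys i)) phi n m al ys) = 0"
proof -
  have "(i, d) \<in> set (rowspec al m)"
    using assms by (auto simp: rowspec_def intro!: bexI[of _ i])
  then obtain r where r: "r < length (rowspec al m)" "rowspec al m ! r = (i, d)"
    by (auto simp: in_set_conv_nth)
  have "r < n" using r(1) assms(3) by (simp add: length_rowspec)
  then show ?thesis
    by (intro det_identical_rows[of _ "Suc n" 0 "Suc r"] eq_vecI) (auto simp: Dmat_def r(2))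
qed

lemma smooth_on_Dfun:
  assumes "open S" "\<forall>c\<le>n. smooth_on (phi c) S"
  shows "smooth_on (\<lambda>x. Dfun phi n m al x ys) S"
  unfolding Dfun_eq_sum using assms by (intro smooth_on_sum smooth_on_cmult) auto

lemma higher_deriv_Dfun_eq_0:
  assumes S: "open S" and phi: "\<forall>c\<le>n. smooth_on (phi c) S" and "ys i \<in> S"
    and "i < m" "d < al i" "(\<Sum>j<m. al j) = n"
  shows "(deriv ^^ d) (\<lambda>x. Dfun phi n m al x ys) (ys i) = 0"
proof -
  have "(deriv ^^ d) (\<lambda>x. Dfun phi n m al x ys) (ys i)
        = (\<Sum>c<Suc n. Dcof phi n m al ys c * (deriv ^^ d) (phi c) (ys i))"
    unfolding Dfun_eq_sum using assms
    by (subst higher_deriv_sum) (auto simp: higher_deriv_cmult smooth_on_cmult)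
  also have "\<dots> = det (Dmat (\<lambda>c. (deriv ^^ d) (phi c) (ys i)) phi n m al ys)"
    by (simp add: det_Dmat mult.commute)
  also have "\<dots> = 0"
    using assms by (intro det_Dmat_derivative_row)
  finally show ?thesis .
qed

lemma PhiF_eq:
  "PhiF f Q a x0 = (\<lambda>x. ((real a + 1) * ((x - x0) * deriv f x - real a * f x)) * Q x
                          - ((x - x0) * f x) * deriv Q x)"
  by (simp add: PhiF_def fun_eq_iff)

lemma PsiF_eq: "PsiF f Q a = (\<lambda>x. ((real a + 1) * deriv f x) * Q x - f x * deriv Q x)"
  by (simp add: PsiF_def fun_eq_iff)

lemma smooth_on_PhiF:
  assumes "open S" "smooth_on f S" "smooth_on Q S"
  shows "smooth_on (PhiF f Q a x0) S"
  unfolding PhiF_eq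
  by (intro smooth_on_diff smooth_on_mult smooth_on_cmult smooth_on_shift_mult smooth_on_deriv assms)

lemma smooth_on_PsiF:
  assumes "open S" "smooth_on f S" "smooth_on Q S"
  shows "smooth_on (PsiF f Q a) S"
  unfolding PsiF_eq by (intro smooth_on_diff smooth_on_mult smooth_on_cmult smooth_on_deriv assms)

lemma higher_deriv_PhiF_eq_0:
  assumes S: "open S" and f: "smooth_on f S" and Q: "smooth_on Q S" and x0: "x0 \<in> S"
    and zero: "\<And>l. l < a \<Longrightarrow> (deriv ^^ l) f x0 = 0" and "j \<le> a"
  shows "(deriv ^^ j) (PhiF f Q a x0) x0 = 0"
proof -
  define U where "U x = (x - x0) * deriv f x - real a * f x" for x
  have f': "smooth_on (deriv f) S"
    using f by (rule smooth_on_deriv)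
  have U: "smooth_on U S" and W: "smooth_on (\<lambda>x. (x - x0) * f x) S"
    unfolding U_def by (intro smooth_on_diff smooth_on_shift_mult smooth_on_cmult S f f')+
  have "(deriv ^^ l) U x0 = real l * (deriv ^^ (l - 1)) (deriv f) x0 - real a * (deriv ^^ l) f x0" for l
    unfolding U_def
    by (simp only: higher_deriv_diff[OF S smooth_on_shift_mult[OF S f'] smooth_on_cmult[OF S f] x0]
          higher_deriv_cmult[OF S f x0] higher_deriv_shift_mult[OF S f' x0]) simp
  also have "\<dots> l = (real l - real a) * (deriv ^^ l) f x0" for l
    by (cases l) (simp_all add: higher_deriv_deriv algebra_simps)
  finally have "(deriv ^^ l) U x0 = (real l - real a) * (deriv ^^ l) f x0" for l .
  then have "(deriv ^^ l) U x0 = 0" if "l \<le> a" for l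
    using zero[of l] that by (cases "l = a") auto
  then have "(deriv ^^ l) (\<lambda>x. (real a + 1) * U x) x0 = 0" if "l \<le> j" for l
    using that \<open>j \<le> a\<close> by (simp add: higher_deriv_cmult[OF S U x0])
  moreover have "(deriv ^^ l) (\<lambda>x. (x - x0) * f x) x0 = 0" if "l \<le> j" for l
    using that \<open>j \<le> a\<close> zero[of "l - 1"] unfolding higher_deriv_shift_mult[OF S f x0] by (cases l) simp_all
  ultimately show ?thesis
    unfolding PhiF_eq U_def[symmetric] using S f Q x0 U W
    by (simp add: higher_deriv_diff higher_deriv_mult_eq_0 smooth_on_mult smooth_on_cmult smooth_on_deriv)
qed

lemma higher_deriv_PsiF_eq_0:
  assumes S: "open S" and f: "smooth_on f S" and Q: "smooth_on Q S" and x0: "x0 \<in> S"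
    and zero: "\<And>l. l < a \<Longrightarrow> (deriv ^^ l) f x0 = 0" and "j < a - 1"
  shows "(deriv ^^ j) (PsiF f Q a) x0 = 0"
proof -
  have "(deriv ^^ l) (\<lambda>x. (real a + 1) * deriv f x) x0 = 0" if "l \<le> j" for l
    using that \<open>j < a - 1\<close> zero[of "Suc l"] S f x0
    by (simp add: higher_deriv_cmult smooth_on_deriv higher_deriv_deriv)
  moreover have "(deriv ^^ l) f x0 = 0" if "l \<le> j" for l
    using that \<open>j < a - 1\<close> zero by simp
  ultimately show ?thesis
    unfolding PsiF_eq using S f Q x0
    by (simp add: higher_deriv_diff higher_deriv_mult_eq_0 smooth_on_mult smooth_on_cmult smooth_on_deriv)
qed

lemma newton_step_eq_PhiF_div_PsiF:
  assumes "Q y \<noteq> 0" "deriv f y - f y * deriv Q y / ((real a + 1) * Q y) \<noteq> 0"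
  shows "y - real a * f y / (deriv f y - f y * deriv Q y / ((real a + 1) * Q y)) - x0
         = PhiF f Q a x0 y / PsiF f Q a y"
proof -
  define \<beta> where "\<beta> = deriv f y - f y * deriv Q y / ((real a + 1) * Q y)"
  define r where "r = (real a + 1) * Q y"
  have "r \<noteq> 0" "\<beta> \<noteq> 0"
    using assms by (simp_all add: r_def \<beta>_def add_nonneg_eq_0_iff)
  have "r * (f y * deriv Q y / r) = f y * deriv Q y"
    using \<open>r \<noteq> 0\<close> by simp
  then have Psi: "PsiF f Q a y = r * \<beta>"
    by (simp add: PsiF_def \<beta>_def r_def algebra_simps)
  have "PhiF f Q a x0 y = (y - x0) * (r * \<beta>) - real a * f y * r"
    unfolding Psi[symmetric] by (simp add: PhiF_def PsiF_def r_def algebra_simps)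
  also have "\<dots> = r * \<beta> * (y - real a * f y / \<beta> - x0)"
    using \<open>\<beta> \<noteq> 0\<close> by (simp add: field_simps)
  finally show ?thesis
    using \<open>r \<noteq> 0\<close> \<open>\<beta> \<noteq> 0\<close> by (simp add: Psi \<beta>_def)
qed

lemma Taylor_leading_term:
  fixes g :: "real \<Rightarrow> real"
  assumes g: "smooth_on g S" and I: "{min x0 x..max x0 x} \<subseteq> S" and "x \<noteq> x0"
    and zero: "\<And>j. j < N \<Longrightarrow> (deriv ^^ j) g x0 = 0"
  obtains t where "t \<in> {min x0 x..max x0 x}"
    "g x = (deriv ^^ N) g x0 / fact N * (x - x0) ^ N
           + (deriv ^^ Suc N) g t / fact (Suc N) * (x - x0) ^ Suc N"
proof -
  have "\<forall>j t. j < Suc N \<and> min x0 x \<le> t \<and> t \<le> max x0 x \<longrightarrow>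
          ((deriv ^^ j) g has_real_derivative (deriv ^^ Suc j) g t) (at t)"
    using smooth_onD[OF g] I by auto
  then obtain t where t: "if x < x0 then x < t \<and> t < x0 else x0 < t \<and> t < x"
    and Taylor: "g x = (\<Sum>j<Suc N. (deriv ^^ j) g x0 / fact j * (x - x0) ^ j)
                       + (deriv ^^ Suc N) g t / fact (Suc N) * (x - x0) ^ Suc N"
    using Taylor[of "Suc N" "\<lambda>j. (deriv ^^ j) g" g "min x0 x" "max x0 x" x0 x] \<open>x \<noteq> x0\<close> by auto
  moreover have "(\<Sum>j<Suc N. (deriv ^^ j) g x0 / fact j * (x - x0) ^ j) = (deriv ^^ N) g x0 / fact N * (x - x0) ^ N"
    using zero by simp
  moreover have "t \<in> {min x0 x..max x0 x}"
    using t by (auto split: if_splits)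
  ultimately show thesis
    using that by simp
qed

lemma leading_terms_quotient:
  fixes e A1 A2 B1 B2 :: real
  assumes "e \<noteq> 0" "0 < a"
  shows "(A1 / fact (a + 1) * e ^ (a + 1) + A2 / fact (Suc (a + 1)) * e ^ Suc (a + 1))
         / (B1 / fact (a - 1) * e ^ (a - 1) + B2 / fact (Suc (a - 1)) * e ^ Suc (a - 1))
       = e\<^sup>2 * (A1 + A2 * e / (real a + 2)) / (real a * (real a + 1) * B1 + (real a + 1) * B2 * e)"
proof -
  obtain p where a: "a = Suc p"
    using \<open>0 < a\<close> gr0_implies_Suc by blast
  define F where "F = (fact p :: real)"
  define r1 where "r1 = real p + 1"
  define r2 where "r2 = real p + 2"
  define r3 where "r3 = real p + 3"
  have nz: "F \<noteq> 0" "r1 \<noteq> 0" "r2 \<noteq> 0" "r3 \<noteq> 0"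
    by (simp_all add: F_def r1_def r2_def r3_def add_nonneg_eq_0_iff)
  have facts: "fact (a - 1) = F" "fact (Suc (a - 1)) = r1 * F" "fact (a + 1) = r2 * r1 * F"
    "fact (Suc (a + 1)) = r3 * r2 * r1 * F"
    by (simp_all add: a F_def r1_def r2_def r3_def fact_Suc algebra_simps)
  have real_a: "real a = r1" "r1 + 1 = r2" "r1 + 2 = r3"
    by (simp_all add: a r1_def r2_def r3_def)
  define k where "k = e ^ p / (r2 * r1 * F)"
  have "k \<noteq> 0"
    using \<open>e \<noteq> 0\<close> nz by (simp add: k_def)
  have "A1 / fact (a + 1) * e ^ (a + 1) + A2 / fact (Suc (a + 1)) * e ^ Suc (a + 1)
        = k * (e\<^sup>2 * (A1 + A2 * e / (real a + 2)))"
    unfolding facts k_def real_a(1) using nz by (simp add: a real_a(2,3) field_simps power2_eq_square)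
  moreover have "B1 / fact (a - 1) * e ^ (a - 1) + B2 / fact (Suc (a - 1)) * e ^ Suc (a - 1)
        = k * (real a * (real a + 1) * B1 + (real a + 1) * B2 * e)"
    unfolding facts k_def real_a(1) using nz
    by (simp add: a real_a(2,3) field_simps) (simp add: r1_def r2_def algebra_simps)
  ultimately show ?thesis
    using \<open>k \<noteq> 0\<close> by simp
qed

lemma newton_step_error:
  fixes f Q :: "real \<Rightarrow> real" and a :: nat and x0 y :: real
  defines "e \<equiv> y - x0"
  assumes S: "open S" and f: "smooth_on f S" and Q: "smooth_on Q S"
    and I: "{min x0 y..max x0 y} \<subseteq> S" and "0 < a"
    and zero: "\<And>l. l < a \<Longrightarrow> (deriv ^^ l) f x0 = 0"
    and Qy: "Q y \<noteq> 0" and \<beta>: "deriv f y - f y * deriv Q y / ((real a + 1) * Q y) \<noteq> 0"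
  obtains t1 t2 where "t1 \<in> {min x0 y..max x0 y}" "t2 \<in> {min x0 y..max x0 y}"
    "y - real a * f y / (deriv f y - f y * deriv Q y / ((real a + 1) * Q y)) - x0
     = e\<^sup>2 * ((deriv ^^ (a + 1)) (PhiF f Q a x0) x0 + (deriv ^^ (a + 2)) (PhiF f Q a x0) t1 * e / (real a + 2))
       / (real a * (real a + 1) * (deriv ^^ (a - 1)) (PsiF f Q a) x0
          + (real a + 1) * (deriv ^^ a) (PsiF f Q a) t2 * e)"
proof (cases "y = x0")
  case True
  have "x0 \<in> S"
    using I by auto
  then have "PhiF f Q a x0 y = 0"
    using higher_deriv_PhiF_eq_0[OF S f Q _ zero, where j = 0] True by simp
  then have "y - real a * f y / (deriv f y - f y * deriv Q y / ((real a + 1) * Q y)) - x0 = 0"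
    by (simp add: newton_step_eq_PhiF_div_PsiF[OF Qy \<beta>])
  then show thesis
    using that[of x0 x0] by (simp add: e_def True)
next
  case False
  have x0: "x0 \<in> S"
    using I by auto
  have "\<And>j. j < a + 1 \<Longrightarrow> (deriv ^^ j) (PhiF f Q a x0) x0 = 0"
    using higher_deriv_PhiF_eq_0[OF S f Q x0 zero] by simp
  then obtain t1 where t1: "t1 \<in> {min x0 y..max x0 y}"
    and Phi: "PhiF f Q a x0 y = (deriv ^^ (a + 1)) (PhiF f Q a x0) x0 / fact (a + 1) * (y - x0) ^ (a + 1)
                 + (deriv ^^ Suc (a + 1)) (PhiF f Q a x0) t1 / fact (Suc (a + 1)) * (y - x0) ^ Suc (a + 1)"
    by (rule Taylor_leading_term[OF smooth_on_PhiF[OF S f Q] I False])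
  have "\<And>j. j < a - 1 \<Longrightarrow> (deriv ^^ j) (PsiF f Q a) x0 = 0"
    using higher_deriv_PsiF_eq_0[OF S f Q x0 zero] .
  then obtain t2 where t2: "t2 \<in> {min x0 y..max x0 y}"
    and Psi: "PsiF f Q a y = (deriv ^^ (a - 1)) (PsiF f Q a) x0 / fact (a - 1) * (y - x0) ^ (a - 1)
                 + (deriv ^^ Suc (a - 1)) (PsiF f Q a) t2 / fact (Suc (a - 1)) * (y - x0) ^ Suc (a - 1)"
    by (rule Taylor_leading_term[OF smooth_on_PsiF[OF S f Q] I False])
  have "y - x0 \<noteq> 0"
    using False by simp
  from leading_terms_quotient[OF this \<open>0 < a\<close>] show thesis
    using that[OF t1 t2] \<open>0 < a\<close> unfolding newton_step_eq_PhiF_div_PsiF[OF Qy \<beta>] Phi Psi e_def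
    by (simp add: numeral_2_eq_2)
qed

lemma abs_sum_mult_le:
  fixes u v :: "nat \<Rightarrow> real"
  assumes "\<And>s. s < m \<Longrightarrow> \<bar>u s\<bar> \<le> A" "\<And>s. s < m \<Longrightarrow> \<bar>v s\<bar> \<le> d"
  shows "\<bar>\<Sum>s<m. u s * v s\<bar> \<le> real m * A * d"
proof -
  have "\<bar>\<Sum>s<m. u s * v s\<bar> \<le> (\<Sum>s<m. \<bar>u s\<bar> * \<bar>v s\<bar>)"
    by (metis (no_types, lifting) abs_mult sum.cong sum_abs)
  also have "\<dots> \<le> (\<Sum>s<m. A * d)"
    using assms by (intro sum_mono mult_mono) (auto intro: order_trans[OF abs_ge_zero])
  finally show ?thesis
    by simp
qed

lemma step_denominator_lower_bound:
  fixes a m B K P F b s e d c :: real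
  assumes "0 \<le> a" "0 \<le> m" "0 \<le> B" "\<bar>b\<bar> \<le> m * B * d" "\<bar>s\<bar> \<le> K" "P\<^sup>2 \<le> F\<^sup>2"
    and "\<bar>e\<bar> < d" "d \<le> c"
  shows "(a + 1)\<^sup>2 * a * P\<^sup>2 - c * (a + 1) * (a * B * m + K)
         \<le> a * (a + 1) * ((a + 1) * F\<^sup>2 + b) + (a + 1) * s * e"
proof -
  have "m * B * d \<le> m * B * c" "(a + 1) * P\<^sup>2 \<le> (a + 1) * F\<^sup>2"
    using assms by (auto intro: mult_left_mono)
  then have "(a + 1) * P\<^sup>2 - m * B * c \<le> (a + 1) * F\<^sup>2 + b"
    using assms by linarith
  then have main: "a * (a + 1) * ((a + 1) * P\<^sup>2 - m * B * c) \<le> a * (a + 1) * ((a + 1) * F\<^sup>2 + b)"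
    using assms by (intro mult_left_mono) auto
  have "\<bar>s * e\<bar> \<le> K * c"
    unfolding abs_mult using assms by (intro mult_mono) auto
  then have "- (K * c) \<le> s * e"
    using abs_le_D2 by fastforce
  then have "- ((a + 1) * (K * c)) \<le> (a + 1) * (s * e)"
    using assms mult_left_mono[of "- (K * c)" "s * e" "a + 1"] by simp
  then show ?thesis
    using main by (simp add: algebra_simps power2_eq_square)
qed

lemma step_error_bound:
  fixes a m A B M K P F r1 r2 b s e d c :: real
  assumes "0 \<le> a" "0 \<le> m" "0 \<le> B" "0 \<le> P" "P \<le> \<bar>F\<bar>" "0 < c" "\<bar>e\<bar> < d" "d \<le> c"
    and r1: "\<bar>r1\<bar> \<le> m * A * d" and r2: "\<bar>r2\<bar> \<le> M"
    and "\<bar>b\<bar> \<le> m * B * d" "\<bar>s\<bar> \<le> K"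
    and cond: "c\<^sup>2 * (m * A + M / (a + 2)) < (a + 1)\<^sup>2 * a * P\<^sup>2 - c * (a + 1) * (a * B * m + K)"
  shows "\<bar>e\<^sup>2 * (r1 + r2 * e / (a + 2)) / (a * (a + 1) * ((a + 1) * F\<^sup>2 + b) + (a + 1) * s * e)\<bar>
         < d ^ 3 / c\<^sup>2"
proof -
  define N where "N = m * A + M / (a + 2)"
  define D where "D = a * (a + 1) * ((a + 1) * F\<^sup>2 + b) + (a + 1) * s * e"
  have "0 < d"
    using \<open>\<bar>e\<bar> < d\<close> by linarith
  have "0 \<le> m * A"
    using r1 \<open>0 < d\<close> by (smt (verit) zero_le_mult_iff)
  moreover have "0 \<le> M"
    using r2 by linarith
  ultimately have "0 \<le> N"
    using assms by (simp add: N_def)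
  have "\<bar>r2 * e / (a + 2)\<bar> \<le> M * d / (a + 2)"
    using assms by (simp add: abs_mult divide_right_mono mult_mono)
  then have num: "\<bar>r1 + r2 * e / (a + 2)\<bar> \<le> d * N"
    using r1 abs_triangle_ineq[of r1 "r2 * e / (a + 2)"] by (simp add: N_def algebra_simps add_divide_distrib)
  have "P\<^sup>2 \<le> F\<^sup>2"
    using assms power_mono[of P "\<bar>F\<bar>" 2] by simp
  then have den: "c\<^sup>2 * N < D"
    using cond step_denominator_lower_bound[OF \<open>0 \<le> a\<close> \<open>0 \<le> m\<close> \<open>0 \<le> B\<close>] assms
    unfolding N_def D_def by fastforce
  then have "0 < D"
    using \<open>0 \<le> N\<close> by (smt (verit) mult_nonneg_nonneg zero_le_power2)
  have "e\<^sup>2 \<le> d\<^sup>2"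
    using power_mono[of "\<bar>e\<bar>" d 2] assms by simp
  have "e\<^sup>2 * \<bar>r1 + r2 * e / (a + 2)\<bar> * c\<^sup>2 \<le> d\<^sup>2 * (d * N) * c\<^sup>2"
    using num \<open>e\<^sup>2 \<le> d\<^sup>2\<close> \<open>0 \<le> N\<close> \<open>0 < d\<close> by (intro mult_right_mono mult_mono) auto
  also have "\<dots> = d ^ 3 * (c\<^sup>2 * N)"
    by (simp add: power2_eq_square power3_eq_cube)
  also have "\<dots> < d ^ 3 * D"
    using den \<open>0 < d\<close> by simp
  finally show ?thesis
    using \<open>0 < D\<close> \<open>0 < c\<close> unfolding D_def[symmetric]
    by (simp add: abs_mult divide_less_eq less_divide_eq mult.commute mult.left_commute)
qed

lemma newton_step_cubic_bound:
  fixes f Q :: "real \<Rightarrow> real" and a :: nat and x0 y m A B M K P c d :: real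
  assumes S: "open S" and f: "smooth_on f S" and Q: "smooth_on Q S"
    and I: "{min x0 y..max x0 y} \<subseteq> S" and "0 < a"
    and zero: "\<And>l. l < a \<Longrightarrow> (deriv ^^ l) f x0 = 0"
    and Qy: "Q y \<noteq> 0" and \<beta>: "deriv f y - f y * deriv Q y / ((real a + 1) * Q y) \<noteq> 0"
    and Phi: "\<bar>(deriv ^^ (a + 1)) (PhiF f Q a x0) x0\<bar> \<le> m * A * d"
    and Psi: "\<bar>(deriv ^^ (a - 1)) (PsiF f Q a) x0 - (real a + 1) * ((deriv ^^ a) f x0)\<^sup>2\<bar> \<le> m * B * d"
    and M: "\<forall>t\<in>{min x0 y..max x0 y}. \<bar>(deriv ^^ (a + 2)) (PhiF f Q a x0) t\<bar> \<le> M"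
    and K: "\<forall>t\<in>{min x0 y..max x0 y}. \<bar>(deriv ^^ a) (PsiF f Q a) t\<bar> \<le> K"
    and nonneg: "0 \<le> m" "0 \<le> B" "0 \<le> P" and P: "P \<le> \<bar>(deriv ^^ a) f x0\<bar>"
    and "0 < c" "\<bar>y - x0\<bar> < d" "d \<le> c"
    and cond: "c\<^sup>2 * (m * A + M / (real a + 2))
               < (real a + 1)\<^sup>2 * real a * P\<^sup>2 - c * (real a + 1) * (real a * B * m + K)"
  shows "\<bar>y - real a * f y / (deriv f y - f y * deriv Q y / ((real a + 1) * Q y)) - x0\<bar> < d ^ 3 / c\<^sup>2"
proof -
  obtain t1 t2 where t: "t1 \<in> {min x0 y..max x0 y}" "t2 \<in> {min x0 y..max x0 y}"
    and error: "y - real a * f y / (deriv f y - f y * deriv Q y / ((real a + 1) * Q y)) - x0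
      = (y - x0)\<^sup>2 * ((deriv ^^ (a + 1)) (PhiF f Q a x0) x0
          + (deriv ^^ (a + 2)) (PhiF f Q a x0) t1 * (y - x0) / (real a + 2))
        / (real a * (real a + 1) * (deriv ^^ (a - 1)) (PsiF f Q a) x0
          + (real a + 1) * (deriv ^^ a) (PsiF f Q a) t2 * (y - x0))"
    by (rule newton_step_error[OF S f Q I \<open>0 < a\<close> zero Qy \<beta>])
  define b where "b = (deriv ^^ (a - 1)) (PsiF f Q a) x0 - (real a + 1) * ((deriv ^^ a) f x0)\<^sup>2"
  have Psi_b: "(deriv ^^ (a - 1)) (PsiF f Q a) x0 = (real a + 1) * ((deriv ^^ a) f x0)\<^sup>2 + b"
    by (simp add: b_def)
  show ?thesis
    unfolding error Psi_b
    by (rule step_error_bound[OF _ nonneg P \<open>0 < c\<close> \<open>\<bar>y - x0\<bar> < d\<close> \<open>d \<le> c\<close> Phi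
          M[rule_format, OF t(1)] Psi[folded b_def] K[rule_format, OF t(2)] cond]) simp
qed

theorem mainTheorem1:
  fixes a b :: real and phi :: "nat \<Rightarrow> real \<Rightarrow> real" and n m :: nat
    and al :: "nat \<Rightarrow> nat" and xs xk xk1 :: "nat \<Rightarrow> real"
    and f :: "real \<Rightarrow> real" and Q :: "nat \<Rightarrow> real \<Rightarrow> real"
    and k :: nat and Aij Bij :: "nat \<Rightarrow> nat \<Rightarrow> real"
    and A B M K P c q :: real
  assumes ab: "a < b"
    and smooth: "\<forall>j\<le>n. smooth_on (phi j) {a<..<b}"
    and cheb: "chebyshev_system phi n {a<..<b}"
    and al_pos: "\<forall>j<m. 0 < al j"
    and al_sum: "(\<Sum>j<m. al j) = n"
    and xs_in: "\<forall>i<m. xs i \<in> {a<..<b}"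
    and xs_dist: "inj_on xs {..<m}"
    and f_def: "f = (\<lambda>x. Dfun phi n m al x xs)"
    and xk_in: "\<forall>i<m. xk i \<in> {a<..<b}"
    and Q_def: "\<forall>i. Q i = (deriv ^^ al i) (\<lambda>x. Dfun phi n m al x xk)"
    and wd_Q: "\<forall>i<m. Q i (xk i) \<noteq> 0"
    and wd_br: "\<forall>i<m. deriv f (xk i) - f (xk i) * deriv (Q i) (xk i) / ((real (al i) + 1) * Q i (xk i)) \<noteq> 0"
    and iter: "\<forall>i<m. xk1 i = xk i - real (al i) * f (xk i) /
                 (deriv f (xk i) - f (xk i) * deriv (Q i) (xk i) / ((real (al i) + 1) * Q i (xk i)))"
    and Phi_exp: "\<forall>i<m. (deriv ^^ (al i + 1)) (PhiF f (Q i) (al i) (xs i)) (xs i)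
                    = (\<Sum>s<m. Aij i s * (xk s - xs s))"
    and Psi_exp: "\<forall>i<m. (deriv ^^ (al i - 1)) (PsiF f (Q i) (al i)) (xs i)
                    = (real (al i) + 1) * ((deriv ^^ al i) f (xs i))^2 + (\<Sum>s<m. Bij i s * (xk s - xs s))"
    and A_bd: "\<forall>i<m. \<forall>s<m. \<bar>Aij i s\<bar> \<le> A"
    and B_bd: "\<forall>i<m. \<forall>s<m. \<bar>Bij i s\<bar> \<le> B"
    and M_bd: "\<forall>i<m. \<forall>x\<in>{min (xs i) (xk i)..max (xs i) (xk i)}.
                 \<bar>(deriv ^^ (al i + 2)) (PhiF f (Q i) (al i) (xs i)) x\<bar> \<le> M"
    and K_bd: "\<forall>i<m. \<forall>x\<in>{min (xs i) (xk i)..max (xs i) (xk i)}.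
                 \<bar>(deriv ^^ al i) (PsiF f (Q i) (al i)) x\<bar> \<le> K"
    and P_pos: "0 < P"
    and P_bd: "\<forall>i<m. P \<le> \<bar>(deriv ^^ al i) f (xs i)\<bar>"
    and c_pos: "0 < c" and q_pos: "0 < q" and q_lt: "q < 1"
    and cond: "\<forall>i<m. c^2 * (real m * A + M / (real (al i) + 2))
                 < (real (al i) + 1)^2 * real (al i) * P^2
                   - c * (real (al i) + 1) * (real (al i) * B * real m + K)"
    and close: "\<forall>i<m. \<bar>xk i - xs i\<bar> < c * q ^ (3 ^ k)"
  shows "\<forall>i<m. \<bar>xk1 i - xs i\<bar> < c * q ^ (3 ^ (k + 1))"
proof (intro allI impI)
  fix i assume i: "i < m"
  define d where "d = c * q ^ 3 ^ k"
  have S: "open {a<..<b}"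
    by simp
  have f: "smooth_on f {a<..<b}"
    unfolding f_def using S smooth by (rule smooth_on_Dfun)
  have Q: "smooth_on (Q i) {a<..<b}"
    unfolding Q_def[rule_format] using S smooth by (intro smooth_on_higher_deriv smooth_on_Dfun)
  have I: "{min (xs i) (xk i)..max (xs i) (xk i)} \<subseteq> {a<..<b}"
    using xs_in[rule_format, OF i] xk_in[rule_format, OF i] by (auto simp: min_def max_def)
  have zero: "\<And>l. l < al i \<Longrightarrow> (deriv ^^ l) f (xs i) = 0"
    unfolding f_def using S smooth xs_in i al_sum by (intro higher_deriv_Dfun_eq_0) auto
  have "\<bar>xk1 i - xs i\<bar> < d ^ 3 / c\<^sup>2"
    unfolding iter[rule_format, OF i]
  proof (rule newton_step_cubic_bound[OF S f Q I al_pos[rule_format, OF i] zero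
                wd_Q[rule_format, OF i] wd_br[rule_format, OF i], where P = P and M = M and K = K])
    show "\<bar>(deriv ^^ (al i + 1)) (PhiF f (Q i) (al i) (xs i)) (xs i)\<bar> \<le> real m * A * d"
      unfolding Phi_exp[rule_format, OF i] using A_bd close i
      by (intro abs_sum_mult_le) (auto simp: d_def less_imp_le)
    show "\<bar>(deriv ^^ (al i - 1)) (PsiF f (Q i) (al i)) (xs i) - (real (al i) + 1) * ((deriv ^^ al i) f (xs i))\<^sup>2\<bar>
          \<le> real m * B * d"
      unfolding Psi_exp[rule_format, OF i] using B_bd close i
      by (simp, intro abs_sum_mult_le) (auto simp: d_def less_imp_le)
    show "0 \<le> B"
      using B_bd i by (meson abs_ge_zero order_trans)
  qed (use i M_bd K_bd P_pos P_bd c_pos q_pos q_lt cond close in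
       \<open>auto simp: d_def mult_le_cancel_left1 power_le_one\<close>)
  also have "d ^ 3 / c\<^sup>2 = c * q ^ 3 ^ (k + 1)"
    unfolding power_add power_one_right power_mult d_def
    using c_pos by (simp add: power2_eq_square power3_eq_cube power_mult_distrib)
  finally show "\<bar>xk1 i - xs i\<bar> < c * q ^ 3 ^ (k + 1)" .
qed

end
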